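(* Let $d \geq 1$ and let $X \subset S^{\mathbb{Z}^d}$ be a countable subshift. Then there is no sequence $(x^i)_{i \in \mathbb{N}}$ of points of $X$ with $x^i \succ x^{i-1}$ for all $i \geq 1$.
   Context: A $d$-dimensional subshift is a closed subset of $S^{\mathbb{Z}^d}$ ($S$ finite, product topology) invariant under all coordinate shifts. For configurations $x,y$, $x \succcurlyeq y$ means every finite pattern occurring in $y$ also occurs in $x$ (the subpattern preorder); $x \approx y$ means $x \succcurlyeq y$ and $y \succcurlyeq x$; $x \succ y$ means $x \succcurlyeq y$ and $x \not\approx y$. *)

theory Defs
  imports "HOL-Analysis.Analysis"
begin

text \<open>Lattice Z^d is modelled as functions 'd \<Rightarrow> int for a finite (nonempty) index
type 'd, so d = CARD('d) \<ge> 1. The alphabet S is a finite type 'a.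
Configurations are maps from Z^d to S.\<close>

type_synonym ('d, 'a) config = "('d \<Rightarrow> int) \<Rightarrow> 'a"

definition shift :: "('d \<Rightarrow> int) \<Rightarrow> ('d, 'a) config \<Rightarrow> ('d, 'a) config" where
  "shift v x = (\<lambda>p. x (\<lambda>i. p i + v i))"

definition config_topology :: "('d, 'a) config topology" where
  "config_topology = product_topology (\<lambda>_. discrete_topology UNIV) UNIV"

definition subshift :: "('d::finite, 'a::finite) config set \<Rightarrow> bool" where
  "subshift X \<longleftrightarrow> closedin config_topology X \<and> (\<forall>v. \<forall>x\<in>X. shift v x \<in> X)"

text \<open>A finite pattern is a finite domain D \<subseteq> Z^d with a labelling f; it occurs in x
if some translate of it agrees with x.\<close>
definition occurs_in :: "('d \<Rightarrow> int) set \<Rightarrow> ('d, 'a) config \<Rightarrow> ('d, 'a) config \<Rightarrow> bool" where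
  "occurs_in D f x \<longleftrightarrow> (\<exists>v. \<forall>p\<in>D. x (\<lambda>i. p i + v i) = f p)"

definition subpat_ge :: "('d, 'a) config \<Rightarrow> ('d, 'a) config \<Rightarrow> bool" (infix "\<succeq>\<^sub>p" 50) where
  "x \<succeq>\<^sub>p y \<longleftrightarrow> (\<forall>D f. finite D \<longrightarrow> occurs_in D f y \<longrightarrow> occurs_in D f x)"

definition subpat_equiv :: "('d, 'a) config \<Rightarrow> ('d, 'a) config \<Rightarrow> bool" (infix "\<approx>\<^sub>p" 50) where
  "x \<approx>\<^sub>p y \<longleftrightarrow> x \<succeq>\<^sub>p y \<and> y \<succeq>\<^sub>p x"

definition subpat_gt :: "('d, 'a) config \<Rightarrow> ('d, 'a) config \<Rightarrow> bool" (infix "\<succ>\<^sub>p" 50) where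
  "x \<succ>\<^sub>p y \<longleftrightarrow> x \<succeq>\<^sub>p y \<and> \<not> x \<approx>\<^sub>p y"

end

theory Submission
  imports Defs
begin

(* Call a point z of X a chain root if it is the first term of an
   infinite sequence z = y0, y1, y2, ... in X with y(i+1) strictly above y(i) in the
   subpattern order.  The set A of chain roots has two properties:
   (1) it is shift-invariant, because a shift does not change the set of patterns
       of a configuration;
   (2) every w in A lies strictly below some z in A, and then every cylinder around
       w contains a shift of z (the finite window of w occurs somewhere in z), which
       differs from w because w is not above z.
   Hence A has no isolated points.  The closure of A is then a nonempty perfect set
   in the compact Hausdorff space S^(Z^d), so it has at least the cardinality of the
   continuum.  Since X is closed, this closure lies inside X, contradicting the
   countability of X. *)

lemma occurs_in_shift_iff: "occurs_in D f (shift v x) \<longleftrightarrow> occurs_in D f x"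
proof
  assume "occurs_in D f (shift v x)"
  then obtain u where u: "\<forall>p\<in>D. x (\<lambda>i. p i + u i + v i) = f p"
    by (auto simp: occurs_in_def shift_def)
  show "occurs_in D f x"
    unfolding occurs_in_def by (rule exI[of _ "\<lambda>i. u i + v i"]) (use u in \<open>simp add: add.assoc\<close>)
next
  assume "occurs_in D f x"
  then obtain u where u: "\<forall>p\<in>D. x (\<lambda>i. p i + u i) = f p"
    by (auto simp: occurs_in_def)
  show "occurs_in D f (shift v x)"
    unfolding occurs_in_def shift_def by (rule exI[of _ "\<lambda>i. u i - v i"]) (simp add: u)
qed

lemma subpat_equiv_shift: "shift v x \<approx>\<^sub>p x"
  by (simp add: subpat_equiv_def subpat_ge_def occurs_in_shift_iff)

lemma subpat_ge_trans: "x \<succeq>\<^sub>p y \<Longrightarrow> y \<succeq>\<^sub>p z \<Longrightarrow> x \<succeq>\<^sub>p z"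
  by (auto simp: subpat_ge_def)

lemma subpat_gt_shift_right: "y \<succ>\<^sub>p z \<Longrightarrow> y \<succ>\<^sub>p shift v z"
  using subpat_equiv_shift[of v z]
  unfolding subpat_gt_def subpat_equiv_def by (meson subpat_ge_trans)

lemma topspace_config_topology: "topspace config_topology = UNIV"
  by (simp add: config_topology_def)

lemma compact_space_config_topology:
  "compact_space (config_topology :: ('d, 'a::finite) config topology)"
  by (simp add: config_topology_def compact_space_product_topology compact_space_discrete_topology)

lemma Hausdorff_space_config_topology: "Hausdorff_space config_topology"
  by (simp add: config_topology_def Hausdorff_space_product_topology)

lemma openin_config_contains_cylinder:
  assumes "openin config_topology U" "w \<in> U"
  obtains D where "finite D" "\<And>y. (\<forall>p\<in>D. y p = w p) \<Longrightarrow> y \<in> U"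
proof -
  from assms obtain V where V: "finite {i. V i \<noteq> UNIV}" "w \<in> Pi\<^sub>E UNIV V" "Pi\<^sub>E UNIV V \<subseteq> U"
    unfolding config_topology_def openin_product_topology_alt by auto
  have "y \<in> U" if "\<forall>p\<in>{i. V i \<noteq> UNIV}. y p = w p" for y
  proof -
    have "y \<in> Pi\<^sub>E UNIV V" using that V(2) by (auto simp: PiE_iff) (metis UNIV_I)
    then show ?thesis using V(3) by blast
  qed
  then show thesis using V(1) that by blast
qed

text \<open>If z is strictly above w, then w is a limit of shifts of z different from w:
  the window of w seen by a cylinder occurs in z, and no shift of z equals w.\<close>
lemma subpat_gt_shift_in_neighbourhood:
  assumes "z \<succ>\<^sub>p w" "openin config_topology U" "w \<in> U"
  obtains v where "shift v z \<in> U" "shift v z \<noteq> w"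
proof -
  obtain D where D: "finite D" "\<And>y. (\<forall>p\<in>D. y p = w p) \<Longrightarrow> y \<in> U"
    using openin_config_contains_cylinder[OF assms(2,3)] by blast
  have "occurs_in D w w"
    unfolding occurs_in_def by (intro exI[of _ "\<lambda>_. 0"]) simp
  then have "occurs_in D w z"
    using assms(1) D(1) unfolding subpat_gt_def subpat_ge_def by blast
  then obtain v where v: "\<forall>p\<in>D. z (\<lambda>i. p i + v i) = w p"
    by (auto simp: occurs_in_def)
  have "shift v z \<in> U"
    using v by (intro D(2)) (simp add: shift_def)
  moreover have "shift v z \<noteq> w"
    using assms(1) subpat_equiv_shift[of v z]
    unfolding subpat_gt_def subpat_equiv_def by metis
  ultimately show thesis using that by blast
qed

definition chain_roots :: "('d, 'a) config set \<Rightarrow> ('d, 'a) config set" where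
  "chain_roots X = {z. \<exists>ys. ys 0 = z \<and> (\<forall>i. ys i \<in> X) \<and> (\<forall>i. ys (Suc i) \<succ>\<^sub>p ys i)}"

lemma chain_roots_subset: "chain_roots X \<subseteq> X"
  by (auto simp: chain_roots_def)

text \<open>Replacing the first term of a chain by a shift of it keeps a chain, since
  the strict order ignores shifts of the smaller element.\<close>
lemma chain_roots_shift:
  assumes "subshift X" "z \<in> chain_roots X"
  shows "shift v z \<in> chain_roots X"
proof -
  from assms(2) obtain ys where ys: "ys 0 = z" "\<forall>i. ys i \<in> X" "\<forall>i. ys (Suc i) \<succ>\<^sub>p ys i"
    unfolding chain_roots_def by blast
  define ys' where "ys' = ys(0 := shift v z)"
  have "\<forall>i. ys' i \<in> X"
    using ys(1,2) assms(1) by (auto simp: ys'_def subshift_def)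
  moreover have "ys' (Suc i) \<succ>\<^sub>p ys' i" for i
    using ys(1,3) subpat_gt_shift_right[of "ys 1" "ys 0" v]
    by (cases i) (auto simp: ys'_def)
  ultimately show ?thesis
    unfolding chain_roots_def by (intro CollectI exI[of _ ys']) (simp add: ys'_def)
qed

lemma chain_roots_step:
  assumes "z \<in> chain_roots X"
  obtains z' where "z' \<in> chain_roots X" "z' \<succ>\<^sub>p z"
proof -
  from assms obtain ys where ys: "ys 0 = z" "\<forall>i. ys i \<in> X" "\<forall>i. ys (Suc i) \<succ>\<^sub>p ys i"
    unfolding chain_roots_def by blast
  have "ys (Suc 0) \<in> chain_roots X"
    unfolding chain_roots_def using ys by (intro CollectI exI[of _ "\<lambda>i. ys (Suc i)"]) auto
  moreover have "ys (Suc 0) \<succ>\<^sub>p z" using ys(1,3) by blast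
  ultimately show thesis using that by blast
qed

lemma chain_roots_dense_in_itself:
  assumes "subshift X"
  shows "chain_roots X \<subseteq> config_topology derived_set_of chain_roots X"
proof
  fix w assume w: "w \<in> chain_roots X"
  then obtain z where z: "z \<in> chain_roots X" "z \<succ>\<^sub>p w"
    by (rule chain_roots_step)
  have "\<exists>y. y \<noteq> w \<and> y \<in> chain_roots X \<and> y \<in> U"
    if U: "w \<in> U" "openin config_topology U" for U
  proof -
    obtain v where "shift v z \<in> U" "shift v z \<noteq> w"
      using subpat_gt_shift_in_neighbourhood[OF z(2) U(2,1)] .
    then show ?thesis using chain_roots_shift[OF assms z(1)] by blast
  qed
  then show "w \<in> config_topology derived_set_of chain_roots X"
    by (simp add: in_derived_set_of topspace_config_topology)
qed

text \<open>In a locally compact Hausdorff space, the closure of a nonempty set without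
  isolated points is a nonempty perfect set, hence uncountable.\<close>
lemma uncountable_closure_of_dense_in_itself:
  assumes "locally_compact_space T" "Hausdorff_space T"
    and "A \<noteq> {}" "A \<subseteq> topspace T" "A \<subseteq> T derived_set_of A"
  shows "uncountable (T closure_of A)"
proof
  let ?Y = "T closure_of A"
  have "T derived_set_of ?Y \<subseteq> ?Y"
    by (meson closedin_closure_of closedin_contains_derived_set)
  moreover have "?Y \<subseteq> T derived_set_of ?Y"
  proof -
    have "?Y = A \<union> T derived_set_of A"
      using assms(4) by (simp add: closure_of_alt Int_absorb1)
    also have "\<dots> \<subseteq> T derived_set_of ?Y"
      using assms(5) derived_set_of_mono[OF closure_of_subset[OF assms(4)]] by blast
    finally show ?thesis .
  qed
  moreover have "?Y \<noteq> {}"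
    using assms(3,4) closure_of_subset by fastforce
  ultimately have "(UNIV::real set) \<lesssim> ?Y"
    using lepoll_perfect_set[of T ?Y] assms(1,2) by blast
  moreover assume "countable ?Y"
  ultimately show False
    using countable_lepoll uncountable_UNIV_real by blast
qed

theorem proposition13:
  fixes X :: "('d::finite, 'a::finite) config set"
  assumes "subshift X" and "countable X"
  shows "\<not> (\<exists>xs :: nat \<Rightarrow> ('d, 'a) config.
            (\<forall>i. xs i \<in> X) \<and> (\<forall>i\<ge>1. xs i \<succ>\<^sub>p xs (i - 1)))"
proof
  assume "\<exists>xs :: nat \<Rightarrow> ('d, 'a) config.
            (\<forall>i. xs i \<in> X) \<and> (\<forall>i\<ge>1. xs i \<succ>\<^sub>p xs (i - 1))"
  then obtain xs :: "nat \<Rightarrow> ('d, 'a) config"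
    where "\<forall>i. xs i \<in> X" and increasing: "\<forall>i\<ge>1. xs i \<succ>\<^sub>p xs (i - 1)"
    by blast
  moreover have "\<forall>i. xs (Suc i) \<succ>\<^sub>p xs i"
    using increasing by (metis Suc_le_mono diff_Suc_1 zero_le One_nat_def)
  ultimately have nonempty: "chain_roots X \<noteq> {}"
    unfolding chain_roots_def by blast
  have "uncountable (config_topology closure_of chain_roots X)"
    by (rule uncountable_closure_of_dense_in_itself[OF
          compact_imp_locally_compact_space[OF compact_space_config_topology]
          Hausdorff_space_config_topology nonempty _ chain_roots_dense_in_itself[OF assms(1)]])
       (simp add: topspace_config_topology)
  moreover have "config_topology closure_of chain_roots X \<subseteq> X"
    using assms(1) chain_roots_subset by (intro closure_of_minimal) (auto simp: subshift_def)
  ultimately show False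
    using assms(2) countable_subset by blast
qed

end
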